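(* Let $p\ge 2$, let $F$ be a distribution on $\mathbb{R}^p$, let $X\sim F$, let $X_1,X_2,\ldots$ be independent random vectors with distribution $F$, let $t\in\mathbb{R}^p$, and let $(t_n)_{n\in\mathbb{N}}$ be a sequence of random $p$-vectors (defined on the same probability space as the $X_i$). Suppose that $E|t_n-t|^4=O(n^{-2})$ as $n\to\infty$ and $E|X-t|^{-3/2}<\infty$. Let $n^*=\#\{1\le i\le n : X_i\neq t_n\}$. Then $(n-n^* )/\sqrt{n}\to 0$ in probability as $n\to\infty$.
   Context: $|\cdot|$ denotes the Euclidean norm on $\mathbb{R}^p$. *)

theory Defs
  imports "HOL-Probability.Probability"
begin

definition conv_in_prob :: "'a measure \<Rightarrow> (nat \<Rightarrow> 'a \<Rightarrow> real) \<Rightarrow> real \<Rightarrow> bool" where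
  "conv_in_prob M Y c \<longleftrightarrow>
     (\<forall>\<epsilon>>0. (\<lambda>n. measure M {\<omega> \<in> space M. \<bar>Y n \<omega> - c\<bar> > \<epsilon>}) \<longlonglongrightarrow> 0)"

end

theory Submission
  imports Defs "HOL-Real_Asymp.Real_Asymp"
begin

text \<open>
  The number n - n* counts the indices i \<le> n with X i = t n. So n - n* > \<epsilon> \<surd>n forces either
  |t n - t| > \<delta> or at least \<epsilon> \<surd>n of X 1, ..., X n in the closed ball B(t, \<delta>).
  By Markov's inequality the first event has probability at most E|t n - t|^4 / \<delta>^4 = O(n^-2 \<delta>^-4).
  Again by Markov, F(B(t, \<delta>)) \<le> \<delta>^(3/2) E|X - t|^(-3/2), so the expected number of X i in the ball
  is O(n \<delta>^(3/2)) and the second event has probability O(n \<delta>^(3/2) / \<surd>n).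
  With \<delta> = n^(-3/8) both bounds tend to zero.
\<close>

lemma measure_mult_le_nn_integral:
  assumes "finite_measure M" "A \<in> sets M" "a \<ge> 0"
    and "\<And>\<omega>. \<omega> \<in> A \<Longrightarrow> ennreal a \<le> f \<omega>"
  shows "ennreal (measure M A * a) \<le> (\<integral>\<^sup>+\<omega>. f \<omega> \<partial>M)"
proof -
  have "ennreal (measure M A * a) = ennreal a * emeasure M A"
    using assms by (simp add: finite_measure.emeasure_eq_measure ennreal_mult' mult.commute)
  also have "\<dots> = (\<integral>\<^sup>+\<omega>. ennreal a * indicator A \<omega> \<partial>M)"
    using assms by (simp add: nn_integral_cmult_indicator)
  also have "\<dots> \<le> (\<integral>\<^sup>+\<omega>. f \<omega> \<partial>M)"
    by (intro nn_integral_mono) (auto simp: indicator_def assms)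
  finally show ?thesis .
qed

lemma measure_norm_gt_le_moment:
  fixes T :: "'w \<Rightarrow> 'a::euclidean_space"
  assumes "prob_space M" "T \<in> borel_measurable M" "\<delta> > 0" "B \<ge> 0"
    and "(\<integral>\<^sup>+\<omega>. ennreal (norm (T \<omega> - t) ^ k) \<partial>M) \<le> ennreal B"
  shows "measure M {\<omega> \<in> space M. \<delta> < norm (T \<omega> - t)} \<le> B / \<delta> ^ k"
proof -
  let ?A = "{\<omega> \<in> space M. \<delta> < norm (T \<omega> - t)}"
  have "?A \<in> sets M"
    using assms(2) by measurable
  then have "ennreal (measure M ?A * \<delta> ^ k) \<le> (\<integral>\<^sup>+\<omega>. ennreal (norm (T \<omega> - t) ^ k) \<partial>M)"
    using assms(1,3)
    by (intro measure_mult_le_nn_integral ennreal_leI power_mono)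
       (auto simp: prob_space.finite_measure)
  also have "\<dots> \<le> ennreal B"
    by fact
  finally have "measure M ?A * \<delta> ^ k \<le> B"
    using \<open>\<delta> > 0\<close> \<open>B \<ge> 0\<close> by (auto simp: ennreal_le_iff2)
  then show ?thesis
    using \<open>\<delta> > 0\<close> by (simp add: field_simps)
qed

lemma measure_cball_le_negative_moment:
  fixes F :: "'a::euclidean_space measure"
  assumes "finite_measure F" "sets F = sets borel" "b \<le> 0" "\<delta> > 0"
    and "(\<integral>\<^sup>+x. (if x = t then \<infinity> else ennreal (norm (x - t) powr b)) \<partial>F) < \<infinity>"
  shows "measure F (cball t \<delta>) \<le>
           enn2real (\<integral>\<^sup>+x. (if x = t then \<infinity> else ennreal (norm (x - t) powr b)) \<partial>F) * \<delta> powr (-b)"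
    (is "_ \<le> enn2real ?I * _")
proof -
  have bound: "ennreal (\<delta> powr b) \<le> (if x = t then \<infinity> else ennreal (norm (x - t) powr b))"
    if "x \<in> cball t \<delta>" for x
  proof (cases "x = t")
    case False
    with that have "0 < norm (x - t)" "norm (x - t) \<le> \<delta>"
      by (auto simp: dist_norm norm_minus_commute)
    then show ?thesis
      using False \<open>b \<le> 0\<close> by (auto intro!: ennreal_leI powr_mono2')
  qed simp
  have "ennreal (measure F (cball t \<delta>) * \<delta> powr b) \<le> ?I"
    using assms(1,2) by (intro measure_mult_le_nn_integral bound) auto
  then have "enn2real (ennreal (measure F (cball t \<delta>) * \<delta> powr b)) \<le> enn2real ?I"
    using assms(5) by (intro enn2real_mono) (auto simp: infinity_ennreal_def)
  then have "measure F (cball t \<delta>) * \<delta> powr b * \<delta> powr (-b) \<le> enn2real ?I * \<delta> powr (-b)"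
    by (intro mult_right_mono) auto
  then show ?thesis
    using \<open>\<delta> > 0\<close> by (simp add: mult.assoc powr_add[symmetric])
qed

lemma real_card_eq_sum_indicator:
  "finite I \<Longrightarrow> real (card {i \<in> I. x i \<in> S}) = (\<Sum>i\<in>I. indicator S (x i))"
  by (simp add: indicator_def sum.If_cases Int_def)

lemma real_card_minus_card_filter:
  assumes "finite A"
  shows "real (card A) - real (card {i \<in> A. P i}) = real (card {i \<in> A. \<not> P i})"
proof -
  have "card {i \<in> A. P i} + card {i \<in> A. \<not> P i} = card ({i \<in> A. P i} \<union> {i \<in> A. \<not> P i})"
    using assms by (intro card_Un_disjoint[symmetric]) auto
  also have "{i \<in> A. P i} \<union> {i \<in> A. \<not> P i} = A"
    by auto
  finally show ?thesis
    by (simp flip: of_nat_add)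
qed

lemma measure_card_ge_le:
  assumes "prob_space M" "finite I" "S \<in> sets borel" "c > 0"
    and "\<And>i. i \<in> I \<Longrightarrow> X i \<in> borel_measurable M"
    and "\<And>i. i \<in> I \<Longrightarrow> distr M borel (X i) = F"
  shows "measure M {\<omega> \<in> space M. c \<le> real (card {i \<in> I. X i \<omega> \<in> S})} \<le> card I * measure F S / c"
proof -
  interpret prob_space M by fact
  define u where "u \<omega> = (\<Sum>i\<in>I. indicator (X i -` S \<inter> space M) \<omega> :: real)" for \<omega>
  have preimage: "X i -` S \<inter> space M \<in> sets M" if "i \<in> I" for i
    using assms(3,5) that by (auto intro: measurable_sets)
  have u_card: "u \<omega> = real (card {i \<in> I. X i \<omega> \<in> S})" if "\<omega> \<in> space M" for \<omega>
    using that assms(2) by (simp add: u_def indicator_def sum.If_cases Int_def)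
  have "measure M {\<omega> \<in> space M. c \<le> u \<omega>} \<le> (\<integral>\<omega>. u \<omega> \<partial>M) / c"
    using preimage assms(4) unfolding u_def
    by (intro integral_Markov_inequality_measure[where A = "space M"])
       (auto intro!: integrable_sum integrable_real_indicator sum_nonneg simp: less_top[symmetric])
  also have "(\<integral>\<omega>. u \<omega> \<partial>M) = (\<Sum>i\<in>I. measure M (X i -` S \<inter> space M))"
    using preimage unfolding u_def
    by (subst Bochner_Integration.integral_sum)
       (auto intro!: integrable_real_indicator simp: Int_absorb2 less_top[symmetric])
  also have "\<dots> = (\<Sum>i\<in>I. measure F S)"
    using assms(3,5,6) by (intro sum.cong refl) (metis measure_distr)
  also have "\<dots> = card I * measure F S"
    by simp
  finally have "measure M {\<omega> \<in> space M. c \<le> u \<omega>} \<le> card I * measure F S / c" .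
  moreover have "{\<omega> \<in> space M. c \<le> u \<omega>} = {\<omega> \<in> space M. c \<le> real (card {i \<in> I. X i \<omega> \<in> S})}"
    using u_card by auto
  ultimately show ?thesis
    by simp
qed

lemma measure_coincidences_gt_le:
  fixes X :: "'i \<Rightarrow> 'w \<Rightarrow> 'a::euclidean_space" and T :: "'w \<Rightarrow> 'a"
  assumes "prob_space M" "finite I" "c > 0"
    and "\<And>i. i \<in> I \<Longrightarrow> X i \<in> borel_measurable M"
    and "\<And>i. i \<in> I \<Longrightarrow> distr M borel (X i) = F"
    and "T \<in> borel_measurable M"
  shows "measure M {\<omega> \<in> space M. c < real (card {i \<in> I. X i \<omega> = T \<omega>})}
         \<le> measure M {\<omega> \<in> space M. \<delta> < norm (T \<omega> - t)} + card I * measure F (cball t \<delta>) / c"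
proof -
  interpret prob_space M by fact
  let ?far = "{\<omega> \<in> space M. \<delta> < norm (T \<omega> - t)}"
  let ?crowded = "{\<omega> \<in> space M. c \<le> real (card {i \<in> I. X i \<omega> \<in> cball t \<delta>})}"
  have "card {i \<in> I. X i \<omega> = T \<omega>} \<le> card {i \<in> I. X i \<omega> \<in> cball t \<delta>}"
    if "norm (T \<omega> - t) \<le> \<delta>" for \<omega>
    using that assms(2) by (intro card_mono) (auto simp: dist_norm norm_minus_commute)
  then have "{\<omega> \<in> space M. c < real (card {i \<in> I. X i \<omega> = T \<omega>})} \<subseteq> ?far \<union> ?crowded"
    by (auto simp: not_less intro: order.trans[OF less_imp_le of_nat_mono])
  moreover have "?far \<in> sets M"
    using assms(6) by measurable
  moreover have "(\<lambda>\<omega>. \<Sum>i\<in>I. indicator (cball t \<delta>) (X i \<omega>) :: real) \<in> borel_measurable M"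
    using assms(4) by (intro borel_measurable_sum) (auto intro: borel_measurable_indicator')
  then have "?crowded \<in> sets M"
    using assms(2) by (simp add: real_card_eq_sum_indicator del: mem_cball)
  ultimately have "measure M {\<omega> \<in> space M. c < real (card {i \<in> I. X i \<omega> = T \<omega>})}
                   \<le> measure M ?far + measure M ?crowded"
    by (meson finite_measure_mono measure_Un_le order_trans sets.Un)
  also have "measure M ?crowded \<le> card I * measure F (cball t \<delta>) / c"
    using assms by (intro measure_card_ge_le) auto
  finally show ?thesis
    by simp
qed

lemma measure_coincidence_excess_gt_le:
  fixes X :: "nat \<Rightarrow> 'w \<Rightarrow> 'a::euclidean_space" and T :: "'w \<Rightarrow> 'a"
  assumes "prob_space M" "n > 0" "\<epsilon> > 0" "\<delta> > 0" "B \<ge> 0"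
    and "\<And>i. i \<in> {1..n} \<Longrightarrow> X i \<in> borel_measurable M"
    and "\<And>i. i \<in> {1..n} \<Longrightarrow> distr M borel (X i) = F"
    and "T \<in> borel_measurable M"
    and "(\<integral>\<^sup>+\<omega>. ennreal (norm (T \<omega> - t) ^ k) \<partial>M) \<le> ennreal B"
    and "measure F (cball t \<delta>) \<le> K"
  shows "measure M {\<omega> \<in> space M.
           \<epsilon> < \<bar>(real n - real (card {i \<in> {1..n}. X i \<omega> \<noteq> T \<omega>})) / sqrt (real n)\<bar>}
         \<le> B / \<delta> ^ k + real n * K / (\<epsilon> * sqrt (real n))"
proof -
  have "real n - real (card {i \<in> {1..n}. X i \<omega> \<noteq> T \<omega>}) = real (card {i \<in> {1..n}. X i \<omega> = T \<omega>})"
    for \<omega>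
    using real_card_minus_card_filter[of "{1..n}" "\<lambda>i. X i \<omega> \<noteq> T \<omega>"] by simp
  then have "{\<omega> \<in> space M. \<epsilon> < \<bar>(real n - real (card {i \<in> {1..n}. X i \<omega> \<noteq> T \<omega>})) / sqrt (real n)\<bar>}
      = {\<omega> \<in> space M. \<epsilon> * sqrt (real n) < real (card {i \<in> {1..n}. X i \<omega> = T \<omega>})}"
    using \<open>n > 0\<close> by (simp add: pos_less_divide_eq)
  also have "measure M \<dots> \<le> measure M {\<omega> \<in> space M. \<delta> < norm (T \<omega> - t)}
      + real n * measure F (cball t \<delta>) / (\<epsilon> * sqrt (real n))"
    using measure_coincidences_gt_le[of M "{1..n}" "\<epsilon> * sqrt (real n)" X F T] assms by simp
  finally have "measure M {\<omega> \<in> space M.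
      \<epsilon> < \<bar>(real n - real (card {i \<in> {1..n}. X i \<omega> \<noteq> T \<omega>})) / sqrt (real n)\<bar>}
    \<le> measure M {\<omega> \<in> space M. \<delta> < norm (T \<omega> - t)} + real n * measure F (cball t \<delta>) / (\<epsilon> * sqrt (real n))" .
  moreover have "measure M {\<omega> \<in> space M. \<delta> < norm (T \<omega> - t)} \<le> B / \<delta> ^ k"
    using assms by (intro measure_norm_gt_le_moment)
  moreover have "real n * measure F (cball t \<delta>) / (\<epsilon> * sqrt (real n)) \<le> real n * K / (\<epsilon> * sqrt (real n))"
    using assms(2,3,10) by (intro divide_right_mono mult_left_mono) auto
  ultimately show ?thesis
    by linarith
qed

lemma eventually_le_ennreal_max_zero:
  assumes "\<forall>\<^sub>F n in F. x n \<le> ennreal (C / d n)" "\<And>n. d n \<ge> 0"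
  shows "\<forall>\<^sub>F n in F. x n \<le> ennreal (max C 0 / d n)"
  using assms(1)
proof eventually_elim
  case (elim n)
  also have "ennreal (C / d n) \<le> ennreal (max C 0 / d n)"
    using assms(2)[of n] by (intro ennreal_leI divide_right_mono) auto
  finally show ?case .
qed

lemma coincidence_bound_tendsto_zero:
  fixes C K \<epsilon> :: real
  defines "\<delta> n \<equiv> real n powr (-3/8)"
  shows "(\<lambda>n. C / (real n)^2 / \<delta> n ^ 4 + real n * (K * \<delta> n powr (3/2)) / (\<epsilon> * sqrt (real n)))
           \<longlonglongrightarrow> 0"
proof -
  have "(\<lambda>n. 1 / ((real n)^2 * \<delta> n ^ 4)) \<longlonglongrightarrow> 0"
    unfolding \<delta>_def by real_asymp
  moreover have "(\<lambda>n. real n * \<delta> n powr (3/2) / sqrt (real n)) \<longlonglongrightarrow> 0"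
    unfolding \<delta>_def by real_asymp
  ultimately have "(\<lambda>n. C * (1 / ((real n)^2 * \<delta> n ^ 4))
      + K / \<epsilon> * (real n * \<delta> n powr (3/2) / sqrt (real n))) \<longlonglongrightarrow> 0"
    by (intro tendsto_add_zero tendsto_mult_right_zero)
  then show ?thesis
    by (simp add: mult.commute mult.left_commute)
qed
theorem lemma1:
  fixes M :: "'w measure" and F :: "(real ^ 'p) measure"
    and X :: "nat \<Rightarrow> 'w \<Rightarrow> real ^ 'p" and T :: "nat \<Rightarrow> 'w \<Rightarrow> real ^ 'p"
    and t :: "real ^ 'p"
  assumes "prob_space M"
    and "CARD('p) \<ge> 2"
    and "\<And>i. i \<ge> 1 \<Longrightarrow> X i \<in> borel_measurable M"
    and "prob_space.indep_vars M (\<lambda>_. borel) X {1..}"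
    and "\<And>i. i \<ge> 1 \<Longrightarrow> distr M borel (X i) = F"
    and "\<And>n. T n \<in> borel_measurable M"
    and "\<exists>C. \<forall>\<^sub>F n in sequentially.
           (\<integral>\<^sup>+ \<omega>. ennreal (norm (T n \<omega> - t) ^ 4) \<partial>M) \<le> ennreal (C / (real n) ^ 2)"
    and "(\<integral>\<^sup>+ x. (if x = t then \<infinity> else ennreal (norm (x - t) powr (-3/2))) \<partial>F) < \<infinity>"
  shows "conv_in_prob M
           (\<lambda>n \<omega>. (real n - real (card {i \<in> {1..n}. X i \<omega> \<noteq> T n \<omega>})) / sqrt (real n)) 0"
proof -
  interpret prob_space M by fact
  from assms(7) obtain C0 where C0: "\<forall>\<^sub>F n in sequentially.
      (\<integral>\<^sup>+ \<omega>. ennreal (norm (T n \<omega> - t) ^ 4) \<partial>M) \<le> ennreal (C0 / (real n) ^ 2)"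
    by blast
  define C where "C = max C0 0"
  have "C \<ge> 0"
    by (simp add: C_def)
  have moment: "\<forall>\<^sub>F n in sequentially.
      (\<integral>\<^sup>+ \<omega>. ennreal (norm (T n \<omega> - t) ^ 4) \<partial>M) \<le> ennreal (C / (real n) ^ 2)"
    unfolding C_def using eventually_le_ennreal_max_zero[OF C0] by simp
  define I where
    "I = enn2real (\<integral>\<^sup>+ x. (if x = t then \<infinity> else ennreal (norm (x - t) powr (-3/2))) \<partial>F)"
  have F_distr: "F = distr M borel (X 1)"
    using assms(5)[of 1] by simp
  then have small_ball: "measure F (cball t \<delta>) \<le> I * \<delta> powr (3/2)" if "\<delta> > 0" for \<delta>
    using measure_cball_le_negative_moment[of F "-3/2" \<delta> t] assms(3,8) that
    by (simp add: I_def prob_space.finite_measure prob_space_distr)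
  show ?thesis
    unfolding conv_in_prob_def
  proof (intro allI impI)
    fix \<epsilon> :: real
    assume "\<epsilon> > 0"
    define \<delta> :: "nat \<Rightarrow> real" where "\<delta> n = real n powr (-3/8)" for n
    have bound: "\<forall>\<^sub>F n in sequentially. measure M {\<omega> \<in> space M.
          \<epsilon> < \<bar>(real n - real (card {i \<in> {1..n}. X i \<omega> \<noteq> T n \<omega>})) / sqrt (real n) - 0\<bar>}
        \<le> C / (real n)^2 / \<delta> n ^ 4 + real n * (I * \<delta> n powr (3/2)) / (\<epsilon> * sqrt (real n))"
      using moment eventually_gt_at_top[of 0]
    proof eventually_elim
      case (elim n)
      then have "\<delta> n > 0"
        by (simp add: \<delta>_def)
      with elim assms small_ball \<open>\<epsilon> > 0\<close> \<open>C \<ge> 0\<close> show ?case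
        using measure_coincidence_excess_gt_le[of M n \<epsilon> "\<delta> n" "C / (real n)^2" X F "T n" t 4]
        by simp
    qed
    have limit: "(\<lambda>n. C / (real n)^2 / \<delta> n ^ 4
        + real n * (I * \<delta> n powr (3/2)) / (\<epsilon> * sqrt (real n))) \<longlonglongrightarrow> 0"
      unfolding \<delta>_def by (rule coincidence_bound_tendsto_zero)
    show "(\<lambda>n. measure M {\<omega> \<in> space M.
        \<epsilon> < \<bar>(real n - real (card {i \<in> {1..n}. X i \<omega> \<noteq> T n \<omega>})) / sqrt (real n) - 0\<bar>}) \<longlonglongrightarrow> 0"
      using tendsto_sandwich[OF _ bound tendsto_const limit] by simp
  qed
qed

end
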